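(* Assume that $(X_j,Y_j)$, $j\in\mathbb{Z}$, is a memoryless process (i.e., $P_{X_1^N,Y_1^N}(x_1^N,y_1^N)=\prod_{j=1}^NP_{X,Y}(x_j,y_j)$), where $X_j\in\mathcal{U}$ with $|\mathcal{U}|=L$ and $Y_j\in\mathcal{Y}$ with $\mathcal{Y}$ finite. Then for every $n\ge1$, \[K_{n+1}\le\begin{cases}\frac{2(L-1)}{L}K_n^2 & \text{if } B_{n+1}=0,\\ \left(1+\frac L2\right)K_n & \text{if } B_{n+1}=1.\end{cases}\]
   Context: Identify $\mathcal{U}$ with $\{0,1,\dots,L-1\}$ with addition modulo $L$. For $U\in\mathcal{U}$ and finite-valued $Q$, the non-binary total variation distance is \[K^{(L)}(U|Q)=\sum_q\sum_{u'\ne u}\frac{P_Q(q)}{L-1}\cdot\frac{|P_{U|Q}(u|q)-P_{U|Q}(u'|q)|}{2},\] where the inner sum is over all ordered pairs $(u,u')\in\mathcal{U}^2$ with $u'\ne u$. Polarization setup: for $n\ge1$, $N=2^n$, $G_N=B_NG_2^{\otimes n}$ with $G_2=\begin{bmatrix}1&0\\1&1\end{bmatrix}$ and $B_N$ the bit-reversal permutation matrix; set $U_1^N=X_1^NG_N$ with arithmetic modulo $L$, and $Q_i=(U_1^{i-1},Y_1^N)$. Let $B_1,B_2,\dots$ be i.i.d. Bernoulli$(1/2)$ and $i-1=\sum_{j=1}^nB_j2^{n-j}$. The total variation process is $K_n=K^{(L)}(U_i|Q_i)$; $K_{n+1}$ is defined in the same way with $n+1$ in place of $n$ and the same $B_j$'s.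 *)

theory Defs
  imports "HOL-Library.FuncSet" Complex_Main
begin

text \<open>Alphabet U = {0..<L}; vectors of length N = 2^n are functions on {0..<N}
  (0-based index j corresponds to the paper's index j+1).\<close>

text \<open>Non-binary total variation distance K^(L)(U|Q), given the joint pmf
  PUQ u q = P_{U,Q}(u,q) over u in {0..<L} and q in the finite set Qs.\<close>
definition tvK :: "nat \<Rightarrow> (nat \<Rightarrow> 'q \<Rightarrow> real) \<Rightarrow> 'q set \<Rightarrow> real" where
  "tvK L PUQ Qs =
     (\<Sum>q\<in>Qs. let PQ = (\<Sum>a<L. PUQ a q) in
        \<Sum>u<L. \<Sum>u'\<in>{..<L} - {u}.
          PQ / (real L - 1) * \<bar>PUQ u q / PQ - PUQ u' q / PQ\<bar> / 2)"

text \<open>G_2 = [[1,0],[1,1]] and its n-fold Kronecker power (first factor = most significant index digit).\<close>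
definition G2 :: "nat \<Rightarrow> nat \<Rightarrow> nat" where
  "G2 r c = (if r = 0 \<and> c = 1 then 0 else 1)"

fun kron_pow :: "nat \<Rightarrow> nat \<Rightarrow> nat \<Rightarrow> nat" where
  "kron_pow 0 r c = 1"
| "kron_pow (Suc n) r c = G2 (r div 2^n) (c div 2^n) * kron_pow n (r mod 2^n) (c mod 2^n)"

definition bitrev :: "nat \<Rightarrow> nat \<Rightarrow> nat" where
  "bitrev n r = (\<Sum>k<n. (r div 2^k mod 2) * 2^(n - 1 - k))"

definition BN :: "nat \<Rightarrow> nat \<Rightarrow> nat \<Rightarrow> nat" where
  "BN n r s = (if s = bitrev n r then 1 else 0)"

definition GN :: "nat \<Rightarrow> nat \<Rightarrow> nat \<Rightarrow> nat" where
  "GN n r c = (\<Sum>s<2^n. BN n r s * kron_pow n s c)"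

definition polar_transform :: "nat \<Rightarrow> nat \<Rightarrow> (nat \<Rightarrow> nat) \<Rightarrow> nat \<Rightarrow> nat" where
  "polar_transform L n x c = (\<Sum>r<2^n. x r * GN n r c) mod L"

text \<open>Joint pmf of (U_{p+1}, Q_{p+1}) with Q_{p+1} = (U_1^p, Y_1^N) for the memoryless
  process with single-letter pmf P (0-based position p).\<close>
definition joint_UQ :: "nat \<Rightarrow> (nat \<Rightarrow> 'y \<Rightarrow> real) \<Rightarrow> nat \<Rightarrow> nat
    \<Rightarrow> nat \<Rightarrow> (nat \<Rightarrow> nat) \<times> (nat \<Rightarrow> 'y) \<Rightarrow> real" where
  "joint_UQ L P n p a q =
     (\<Sum>x \<in> ({0..<2^n} \<rightarrow>\<^sub>E {0..<L}).
        if (\<forall>j<p. polar_transform L n x j = fst q j) \<and> polar_transform L n x p = a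
        then (\<Prod>j<2^n. P (x j) (snd q j)) else 0)"

definition Qset :: "nat \<Rightarrow> nat \<Rightarrow> nat \<Rightarrow> ((nat \<Rightarrow> nat) \<times> (nat \<Rightarrow> 'y::finite)) set" where
  "Qset L n p = ({0..<p} \<rightarrow>\<^sub>E {0..<L}) \<times> ({0..<2^n} \<rightarrow>\<^sub>E (UNIV :: 'y set))"

text \<open>K^(L)(U_i|Q_i) at level n with i - 1 = p.\<close>
definition Kproc :: "nat \<Rightarrow> (nat \<Rightarrow> 'y::finite \<Rightarrow> real) \<Rightarrow> nat \<Rightarrow> nat \<Rightarrow> real" where
  "Kproc L P n p = tvK L (joint_UQ L P n p) (Qset L n p)"

end

theory Submission
  imports Defs
begin

text \<open>Split the input of length \<open>2^(n+1)\<close> into two halves \<open>a\<close> and \<open>b\<close>. One step of the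
  polar recursion gives outputs \<open>U\<^sub>2\<^sub>j = (A\<^sub>j + B\<^sub>j) mod L\<close> and \<open>U\<^sub>2\<^sub>j\<^sub>+\<^sub>1 = B\<^sub>j\<close>, where
  \<open>A\<close>, \<open>B\<close> are the level-\<open>n\<close> transforms of the halves; by memorylessness the two halves are
  independent copies of the level-\<open>n\<close> process, and the past at level \<open>n+1\<close> is in bijection with
  a pair of pasts at level \<open>n\<close>. So, writing \<open>f\<close>, \<open>g\<close> for the two unnormalised level-\<open>n\<close>
  conditional laws, the law of \<open>U\<^sub>2\<^sub>p\<close> is the circular convolution \<open>f * g\<close>, and the law of
  \<open>U\<^sub>2\<^sub>p\<^sub>+\<^sub>1\<close> jointly with \<open>U\<^sub>2\<^sub>p = s\<close> is \<open>c \<mapsto> f (s - c) g c\<close>.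

  With \<open>D f = \<Sum>u u'. |f u - f u'|\<close> one has \<open>K = (\<Sum>q. D f\<^sub>q) / (2(L - 1))\<close>. Since the differences
  of \<open>g\<close> sum to zero, \<open>L (f * g)(u) - L (f * g)(u') = \<Sum>a b. (f a - f b)(g (u - a) - g (u' - a))\<close>,
  whence \<open>D (f * g) \<le> D f D g / L\<close>; summing over the pairs of pasts gives the squared bound.
  For the other index, \<open>|xy - x'y'| \<le> x |y - y'| + y' |x - x'|\<close> gives
  \<open>\<Sum>s. D (f (s - \<cdot>) g) \<le> (\<Sum> f) D g + (\<Sum> g) D f\<close>, and as the total masses add up to one this yields
  \<open>K\<^sub>n\<^sub>+\<^sub>1 \<le> 2 K\<^sub>n \<le> (1 + L/2) K\<^sub>n\<close>.\<close>

lemma sum_swap3: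
  "(\<Sum>x\<in>A. \<Sum>y\<in>B. \<Sum>z\<in>C. F x y z) = (\<Sum>y\<in>B. \<Sum>z\<in>C. \<Sum>x\<in>A. (F x y z :: 'a::comm_monoid_add))"
  by (subst sum.swap) (rule sum.cong[OF refl], rule sum.swap)

lemma sum_swap_pairs:
  "(\<Sum>x\<in>A. \<Sum>y\<in>B. \<Sum>z\<in>C. \<Sum>w\<in>D. F x y z w)
     = (\<Sum>z\<in>C. \<Sum>w\<in>D. \<Sum>x\<in>A. \<Sum>y\<in>B. (F x y z w :: 'a::comm_monoid_add))"
proof -
  have "(\<Sum>x\<in>A. \<Sum>y\<in>B. \<Sum>z\<in>C. \<Sum>w\<in>D. F x y z w) = (\<Sum>x\<in>A. \<Sum>z\<in>C. \<Sum>w\<in>D. \<Sum>y\<in>B. F x y z w)"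
    by (rule sum.cong[OF refl]) (rule sum_swap3)
  also have "\<dots> = (\<Sum>z\<in>C. \<Sum>w\<in>D. \<Sum>x\<in>A. \<Sum>y\<in>B. F x y z w)"
    by (rule sum_swap3)
  finally show ?thesis .
qed

lemma mod_less_double: "(x::nat) < 2 * L \<Longrightarrow> x mod L = (if x < L then x else x - L)"
  by (auto simp: mod_if)

lemma sum_lessThan_shift_mod:
  fixes F :: "nat \<Rightarrow> 'a::comm_monoid_add"
  assumes "a < L"
  shows "(\<Sum>u<L. F ((u + L - a) mod L)) = (\<Sum>u<L. F u)"
  by (rule sum.reindex_bij_witness[where i="\<lambda>v. (v + a) mod L" and j="\<lambda>u. (u + L - a) mod L"])
    (use assms in \<open>auto simp: mod_less_double\<close>)

lemma sum_lessThan_reflect_mod: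
  fixes F :: "nat \<Rightarrow> 'a::comm_monoid_add"
  assumes "s < L"
  shows "(\<Sum>u<L. F ((s + L - u) mod L)) = (\<Sum>u<L. F u)"
  by (rule sum.reindex_bij_witness[where i="\<lambda>v. (s + L - v) mod L" and j="\<lambda>u. (s + L - u) mod L"])
    (use assms in \<open>auto simp: mod_less_double\<close>)

lemma mod_sub_add_mod [simp]: "a < L \<Longrightarrow> b < (L::nat) \<Longrightarrow> ((a + L - b) mod L + b) mod L = a"
  by (auto simp: mod_less_double)

lemma mod_add_sub_mod [simp]: "a < L \<Longrightarrow> b < (L::nat) \<Longrightarrow> ((a + b) mod L + L - b) mod L = a"
  by (auto simp: mod_less_double)

lemma add_mod_eq_iff_eq_sub_mod:
  "a < L \<Longrightarrow> b < L \<Longrightarrow> c < (L::nat) \<Longrightarrow> (a + b) mod L = c \<longleftrightarrow> b = (c + L - a) mod L"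
  by (auto simp: mod_less_double)

subsection \<open>Sums of absolute differences and circular convolution\<close>

definition abs_diff_sum :: "nat \<Rightarrow> (nat \<Rightarrow> real) \<Rightarrow> real" where
  "abs_diff_sum L f = (\<Sum>u<L. \<Sum>u'<L. \<bar>f u - f u'\<bar>)"

definition cconv :: "nat \<Rightarrow> (nat \<Rightarrow> real) \<Rightarrow> (nat \<Rightarrow> real) \<Rightarrow> nat \<Rightarrow> real" where
  "cconv L f g a = (\<Sum>c<L. f c * g ((a + L - c) mod L))"

lemma abs_diff_sum_nonneg: "abs_diff_sum L f \<ge> 0"
  unfolding abs_diff_sum_def by (intro sum_nonneg) auto

lemma abs_diff_sum_cong: "(\<And>a. a < L \<Longrightarrow> f a = g a) \<Longrightarrow> abs_diff_sum L f = abs_diff_sum L g"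
  unfolding abs_diff_sum_def by (intro sum.cong refl) auto

lemma abs_diff_sum_shift:
  assumes "a < L"
  shows "(\<Sum>u<L. \<Sum>u'<L. \<bar>g ((u + L - a) mod L) - g ((u' + L - a) mod L)\<bar>) = abs_diff_sum L g"
  unfolding abs_diff_sum_def
  using sum_lessThan_shift_mod[OF assms, where F="\<lambda>v. \<bar>g _ - g v\<bar>"]
    sum_lessThan_shift_mod[OF assms, where F="\<lambda>v. \<Sum>u'<L. \<bar>g v - g u'\<bar>"]
  by simp

lemma cconv_diff:
  assumes "u < L" "u' < L"
  shows "real L * (cconv L f g u - cconv L f g u') =
    (\<Sum>a<L. \<Sum>b<L. (f a - f b) * (g ((u + L - a) mod L) - g ((u' + L - a) mod L)))"
proof -
  define G where "G a = g ((u + L - a) mod L) - g ((u' + L - a) mod L)" for a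
  have G0: "(\<Sum>a<L. G a) = 0"
    unfolding G_def sum_subtractf using sum_lessThan_reflect_mod[OF assms(1), of g]
      sum_lessThan_reflect_mod[OF assms(2), of g] by simp
  have "(\<Sum>a<L. \<Sum>b<L. (f a - f b) * G a) = (\<Sum>a<L. \<Sum>b<L. f a * G a) - (\<Sum>a<L. \<Sum>b<L. f b * G a)"
    by (simp add: left_diff_distrib sum_subtractf)
  also have "(\<Sum>a<L. \<Sum>b<L. f b * G a) = (\<Sum>b<L. f b) * (\<Sum>a<L. G a)"
    unfolding sum_product by (rule sum.swap)
  also have "(\<Sum>a<L. \<Sum>b<L. f a * G a) - (\<Sum>b<L. f b) * (\<Sum>a<L. G a) = real L * (\<Sum>a<L. f a * G a)"
    using G0 by (simp add: sum_distrib_left)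
  also have "(\<Sum>a<L. f a * G a) = cconv L f g u - cconv L f g u'"
    unfolding cconv_def G_def by (simp add: right_diff_distrib sum_subtractf)
  finally show ?thesis unfolding G_def by simp
qed

lemma abs_diff_sum_cconv_le:
  assumes "L > 0"
  shows "abs_diff_sum L (cconv L f g) \<le> abs_diff_sum L f * abs_diff_sum L g / real L"
proof -
  define G where "G u u' a = \<bar>g ((u + L - a) mod L) - g ((u' + L - a) mod L)\<bar>" for u u' a
  have pointwise: "\<bar>cconv L f g u - cconv L f g u'\<bar> \<le> (\<Sum>a<L. \<Sum>b<L. \<bar>f a - f b\<bar> * G u u' a) / real L"
    if "u < L" "u' < L" for u u'
  proof -
    have "real L * \<bar>cconv L f g u - cconv L f g u'\<bar>
        = \<bar>\<Sum>a<L. \<Sum>b<L. (f a - f b) * (g ((u + L - a) mod L) - g ((u' + L - a) mod L))\<bar>"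
      unfolding cconv_diff[OF that, symmetric] abs_mult by simp
    also have "\<dots> \<le> (\<Sum>a<L. \<Sum>b<L. \<bar>f a - f b\<bar> * G u u' a)"
      unfolding G_def
      by (rule order_trans[OF sum_abs], rule sum_mono, rule order_trans[OF sum_abs]) (simp add: abs_mult)
    finally show ?thesis using assms by (simp add: pos_le_divide_eq mult.commute)
  qed
  have "abs_diff_sum L (cconv L f g) \<le> (\<Sum>u<L. \<Sum>u'<L. (\<Sum>a<L. \<Sum>b<L. \<bar>f a - f b\<bar> * G u u' a) / real L)"
    unfolding abs_diff_sum_def by (intro sum_mono pointwise) auto
  also have "\<dots> = (\<Sum>a<L. \<Sum>b<L. \<Sum>u<L. \<Sum>u'<L. \<bar>f a - f b\<bar> * G u u' a) / real L"
    unfolding sum_divide_distrib[symmetric] by (rule arg_cong[where f="\<lambda>x. x / real L"], rule sum_swap_pairs)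
  also have "\<dots> = (\<Sum>a<L. \<Sum>b<L. \<bar>f a - f b\<bar> * abs_diff_sum L g) / real L"
    unfolding G_def by (simp add: abs_diff_sum_shift sum_distrib_left[symmetric])
  also have "\<dots> = abs_diff_sum L f * abs_diff_sum L g / real L"
    unfolding abs_diff_sum_def by (simp add: sum_distrib_right)
  finally show ?thesis .
qed

lemma sum_abs_diff_sum_reflect_mult_le:
  assumes f: "\<And>u. f u \<ge> 0" and g: "\<And>u. g u \<ge> 0"
  shows "(\<Sum>s<L. abs_diff_sum L (\<lambda>u. f ((s + L - u) mod L) * g u))
     \<le> (\<Sum>u<L. f u) * abs_diff_sum L g + (\<Sum>u<L. g u) * abs_diff_sum L f"
proof -
  define h where "h s u = f ((s + L - u) mod L)" for s u
  define T1 where "T1 = (\<Sum>s<L. \<Sum>u<L. \<Sum>u'<L. h s u * \<bar>g u - g u'\<bar>)"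
  define T2 where "T2 = (\<Sum>s<L. \<Sum>u<L. \<Sum>u'<L. g u' * \<bar>h s u - h s u'\<bar>)"
  have "(\<Sum>s<L. abs_diff_sum L (\<lambda>u. h s u * g u))
     \<le> (\<Sum>s<L. \<Sum>u<L. \<Sum>u'<L. h s u * \<bar>g u - g u'\<bar> + g u' * \<bar>h s u - h s u'\<bar>)"
    unfolding abs_diff_sum_def
  proof (intro sum_mono)
    fix s u u'
    have "h s u * g u - h s u' * g u' = h s u * (g u - g u') + g u' * (h s u - h s u')"
      by (simp add: algebra_simps)
    then show "\<bar>h s u * g u - h s u' * g u'\<bar> \<le> h s u * \<bar>g u - g u'\<bar> + g u' * \<bar>h s u - h s u'\<bar>"
      using f g by (simp add: h_def abs_mult abs_triangle_ineq[THEN order_trans])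
  qed
  also have "\<dots> = T1 + T2"
    unfolding T1_def T2_def by (simp add: sum.distrib)
  also have "T1 = (\<Sum>u<L. f u) * abs_diff_sum L g"
  proof -
    have "T1 = (\<Sum>u<L. \<Sum>u'<L. (\<Sum>s<L. h s u) * \<bar>g u - g u'\<bar>)"
      unfolding T1_def by (subst sum_swap3) (simp add: sum_distrib_right)
    also have "\<dots> = (\<Sum>u<L. \<Sum>u'<L. (\<Sum>s<L. f s) * \<bar>g u - g u'\<bar>)"
      unfolding h_def by (intro sum.cong refl) (simp add: sum_lessThan_shift_mod)
    finally show ?thesis
      unfolding abs_diff_sum_def by (simp add: sum_distrib_left)
  qed
  also have "T2 = (\<Sum>u<L. g u) * abs_diff_sum L f"
  proof -
    have "(\<Sum>s<L. \<Sum>u<L. \<bar>h s u - h s u'\<bar>) = abs_diff_sum L f" if "u' < L" for u'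
    proof -
      have "(\<Sum>s<L. \<Sum>u<L. \<bar>h s u - h s u'\<bar>) = (\<Sum>s<L. \<Sum>v<L. \<bar>f v - f ((s + L - u') mod L)\<bar>)"
        unfolding h_def
        by (rule sum.cong[OF refl]) (rule sum_lessThan_reflect_mod[where F="\<lambda>v. \<bar>f v - _\<bar>"], simp)
      also have "\<dots> = (\<Sum>v<L. \<Sum>s<L. \<bar>f v - f ((s + L - u') mod L)\<bar>)"
        by (rule sum.swap)
      also have "\<dots> = abs_diff_sum L f"
        unfolding abs_diff_sum_def using that
        by (intro sum.cong[OF refl] sum_lessThan_shift_mod[where F="\<lambda>t. \<bar>f _ - f t\<bar>"])
      finally show ?thesis .
    qed
    moreover have "T2 = (\<Sum>u'<L. g u' * (\<Sum>s<L. \<Sum>u<L. \<bar>h s u - h s u'\<bar>))"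
      unfolding T2_def sum_distrib_left by (subst sum_swap3) (rule sum_swap3)
    ultimately show ?thesis by (simp add: sum_distrib_right)
  qed
  finally show ?thesis unfolding h_def .
qed

lemma tvK_eq_abs_diff_sum:
  assumes "\<And>a q. PUQ a q \<ge> 0"
  shows "tvK L PUQ Qs = (\<Sum>q\<in>Qs. abs_diff_sum L (\<lambda>a. PUQ a q)) / (2 * (real L - 1))"
proof -
  have term_eq: "(\<Sum>a<L. f a) / (real L - 1) * \<bar>f u / (\<Sum>a<L. f a) - f u' / (\<Sum>a<L. f a)\<bar> / 2
      = \<bar>f u - f u'\<bar> / (2 * (real L - 1))"
    if nonneg: "\<And>a. f a \<ge> 0" and "u < L" "u' < L" for f :: "nat \<Rightarrow> real" and u u'
  proof (cases "(\<Sum>a<L. f a) = 0")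
    case True
    then have "f a = 0" if "a < L" for a
      using nonneg that by (simp add: sum_nonneg_eq_0_iff)
    with True \<open>u < L\<close> \<open>u' < L\<close> show ?thesis by simp
  next
    case False
    moreover have "(\<Sum>a<L. f a) \<ge> 0" using nonneg by (simp add: sum_nonneg)
    ultimately have "\<bar>f u / (\<Sum>a<L. f a) - f u' / (\<Sum>a<L. f a)\<bar> = \<bar>f u - f u'\<bar> / (\<Sum>a<L. f a)"
      by (simp add: diff_divide_distrib[symmetric] abs_divide)
    with False show ?thesis by simp
  qed
  have "tvK L PUQ Qs = (\<Sum>q\<in>Qs. \<Sum>u<L. \<Sum>u'\<in>{..<L} - {u}. \<bar>PUQ u q - PUQ u' q\<bar> / (2 * (real L - 1)))"
    unfolding tvK_def Let_def by (intro sum.cong refl term_eq assms) auto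
  also have "\<dots> = (\<Sum>q\<in>Qs. abs_diff_sum L (\<lambda>a. PUQ a q)) / (2 * (real L - 1))"
    by (simp add: abs_diff_sum_def sum_diff1 sum_divide_distrib)
  finally show ?thesis .
qed

subsection \<open>One step of the polar transform\<close>

lemma bitrev_Suc: "bitrev (Suc n) r = (r mod 2) * 2^n + bitrev n (r div 2)"
  unfolding bitrev_def by (subst sum.lessThan_Suc_shift) (simp add: div_mult2_eq)

lemma bitrev_less: "bitrev n r < 2^n"
proof (induction n arbitrary: r)
  case (Suc n)
  have "(r mod 2) * 2^n \<le> 1 * 2^n" by (rule mult_right_mono) simp_all
  with Suc[of "r div 2"] have "(r mod 2) * 2^n + bitrev n (r div 2) < 2 * 2^n" by linarith
  then show ?case unfolding bitrev_Suc by simp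
qed (simp add: bitrev_def)

lemma bitrev_Suc_high: "bitrev (Suc n) r = 2 * bitrev n (r mod 2^n) + r div 2^n mod 2"
proof (induction n arbitrary: r)
  case (Suc n)
  have "r mod (2 * 2^n) mod 2 = r mod 2" "r mod (2 * 2^n) div 2 = r div 2 mod 2^n"
    by (simp_all add: mod_mult2_eq)
  moreover have "r div 2 div 2^n = r div (2 * 2^n)" by (simp add: div_mult2_eq)
  ultimately show ?case using Suc[of "r div 2"] by (simp add: bitrev_Suc)
qed (simp add: bitrev_def)

lemma kron_pow_Suc_low:
  "kron_pow (Suc n) s c = G2 (s mod 2) (c mod 2) * kron_pow n (s div 2) (c div 2)"
  if "s < 2^Suc n" "c < 2^Suc n"
  using that
proof (induction n arbitrary: s c)
  case (Suc n)
  have "x mod (2 * 2^n) mod 2 = x mod 2" "x mod (2 * 2^n) div 2 = x div 2 mod 2^n"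
    "x div 2 div 2^n = x div (2 * 2^n)" for x :: nat
    by (simp_all add: mod_mult2_eq div_mult2_eq)
  then show ?case by (subst kron_pow.simps, subst Suc.IH) simp_all
qed simp

lemma GN_eq_kron_pow: "GN n r c = kron_pow n (bitrev n r) c"
proof -
  have "GN n r c = (\<Sum>s<2^n. if s = bitrev n r then kron_pow n s c else 0)"
    unfolding GN_def BN_def by (intro sum.cong) auto
  then show ?thesis using bitrev_less[of n r] by simp
qed

lemma GN_Suc:
  assumes "r < 2^Suc n" "c < 2^n" "e < 2"
  shows "GN (Suc n) r (2*c + e) = G2 (r div 2^n) e * GN n (r mod 2^n) c"
proof -
  have "r div 2^n < 2" using assms(1) by (simp add: less_mult_imp_div_less)
  then have "GN (Suc n) r (2*c + e) = kron_pow (Suc n) (2 * bitrev n (r mod 2^n) + r div 2^n) (2*c + e)"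
    by (simp add: GN_eq_kron_pow bitrev_Suc_high)
  also have "\<dots> = G2 (r div 2^n) e * kron_pow n (bitrev n (r mod 2^n)) c"
    using \<open>r div 2^n < 2\<close> assms bitrev_less[of n "r mod 2^n"] by (subst kron_pow_Suc_low) auto
  finally show ?thesis by (simp add: GN_eq_kron_pow)
qed

lemma sum_lessThan_add_split:
  "(\<Sum>r<m + k. F r) = (\<Sum>r<m. F r) + (\<Sum>r<k. F (m + r))" for m k :: nat
  by (induction k) (simp_all add: add_ac)

lemma prod_lessThan_add_split:
  "(\<Prod>r<m + k. F r) = (\<Prod>r<m. F r) * (\<Prod>r<k. F (m + r))" for m k :: nat
  by (induction k) (simp_all add: mult_ac)

definition join_halves :: "nat \<Rightarrow> (nat \<Rightarrow> 'a) \<Rightarrow> (nat \<Rightarrow> 'a) \<Rightarrow> nat \<Rightarrow> 'a" where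
  "join_halves n a b = (\<lambda>r\<in>{0..<2^Suc n}. if r < 2^n then a r else b (r - 2^n))"

definition lower_half :: "nat \<Rightarrow> (nat \<Rightarrow> 'a) \<Rightarrow> nat \<Rightarrow> 'a" where
  "lower_half n x = restrict x {0..<2^n}"

definition upper_half :: "nat \<Rightarrow> (nat \<Rightarrow> 'a) \<Rightarrow> nat \<Rightarrow> 'a" where
  "upper_half n x = (\<lambda>r\<in>{0..<2^n}. x (2^n + r))"

lemma lower_half_join_halves [simp]:
  "a \<in> {0..<2^n} \<rightarrow>\<^sub>E A \<Longrightarrow> lower_half n (join_halves n a b) = a"
  by (auto simp: join_halves_def lower_half_def PiE_iff extensional_def fun_eq_iff)

lemma upper_half_join_halves [simp]:
  "b \<in> {0..<2^n} \<rightarrow>\<^sub>E A \<Longrightarrow> upper_half n (join_halves n a b) = b"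
  by (auto simp: join_halves_def upper_half_def PiE_iff extensional_def fun_eq_iff)

lemma join_halves_lower_upper [simp]:
  "x \<in> {0..<2^Suc n} \<rightarrow>\<^sub>E A \<Longrightarrow> join_halves n (lower_half n x) (upper_half n x) = x"
  by (auto simp: join_halves_def lower_half_def upper_half_def PiE_iff extensional_def fun_eq_iff)

lemma bij_betw_join_halves:
  "bij_betw (\<lambda>(a, b). join_halves n a b)
     (({0..<2^n} \<rightarrow>\<^sub>E A) \<times> ({0..<2^n} \<rightarrow>\<^sub>E A)) ({0..<2^Suc n} \<rightarrow>\<^sub>E A)"
proof (rule bij_betw_byWitness[where f'="\<lambda>x. (lower_half n x, upper_half n x)"])
  show "(\<lambda>(a, b). join_halves n a b) ` (({0..<2^n} \<rightarrow>\<^sub>E A) \<times> ({0..<2^n} \<rightarrow>\<^sub>E A)) \<subseteq> {0..<2^Suc n} \<rightarrow>\<^sub>E A"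
    by (auto simp: join_halves_def PiE_iff)
  show "(\<lambda>x. (lower_half n x, upper_half n x)) ` ({0..<2^Suc n} \<rightarrow>\<^sub>E A)
      \<subseteq> ({0..<2^n} \<rightarrow>\<^sub>E A) \<times> ({0..<2^n} \<rightarrow>\<^sub>E A)"
    by (auto simp: lower_half_def upper_half_def)
qed auto

lemma sum_PiE_join_halves:
  "(\<Sum>x\<in>{0..<2^Suc n} \<rightarrow>\<^sub>E A. F x) = (\<Sum>a\<in>{0..<2^n} \<rightarrow>\<^sub>E A. \<Sum>b\<in>{0..<2^n} \<rightarrow>\<^sub>E A. F (join_halves n a b))"
proof -
  have "(\<Sum>x\<in>{0..<2^Suc n} \<rightarrow>\<^sub>E A. F x)
      = (\<Sum>ab\<in>({0..<2^n} \<rightarrow>\<^sub>E A) \<times> ({0..<2^n} \<rightarrow>\<^sub>E A). F (case ab of (a, b) \<Rightarrow> join_halves n a b))"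
    by (rule sum.reindex_bij_betw[symmetric]) (rule bij_betw_join_halves)
  then show ?thesis by (simp add: sum.cartesian_product split_def)
qed

lemma sum_PiE_halves:
  "(\<Sum>x\<in>{0..<2^Suc n} \<rightarrow>\<^sub>E A. F (lower_half n x) (upper_half n x))
     = (\<Sum>a\<in>{0..<2^n} \<rightarrow>\<^sub>E A. \<Sum>b\<in>{0..<2^n} \<rightarrow>\<^sub>E A. F a b)"
proof -
  have "(\<Sum>a\<in>{0..<2^n} \<rightarrow>\<^sub>E A. \<Sum>b\<in>{0..<2^n} \<rightarrow>\<^sub>E A. F a b)
      = (\<Sum>a\<in>{0..<2^n} \<rightarrow>\<^sub>E A. \<Sum>b\<in>{0..<2^n} \<rightarrow>\<^sub>E A.
           F (lower_half n (join_halves n a b)) (upper_half n (join_halves n a b)))"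
    by (intro sum.cong refl) simp_all
  then show ?thesis by (simp only: sum_PiE_join_halves)
qed

lemma prod_join_halves:
  "(\<Prod>j<2^Suc n. F (join_halves n a b j) j)
     = (\<Prod>j<2^n. F (a j) j) * (\<Prod>j<2^n. F (b j) (2^n + j))"
  using prod_lessThan_add_split[where m="2^n" and k="2^n" and F="\<lambda>j. F (join_halves n a b j) j"]
  by (simp add: mult_2 join_halves_def)

lemma sum_join_halves_GN_Suc:
  assumes "c < 2^n" "e < 2"
  shows "(\<Sum>r<2^Suc n. join_halves n a b r * GN (Suc n) r (2*c + e)) =
     G2 0 e * (\<Sum>r<2^n. a r * GN n r c) + G2 1 e * (\<Sum>r<2^n. b r * GN n r c)"
proof -
  have halves: "(2::nat)^Suc n = 2^n + 2^n" by simp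
  have "(\<Sum>r<2^n. join_halves n a b r * GN (Suc n) r (2*c + e)) = G2 0 e * (\<Sum>r<2^n. a r * GN n r c)"
    using assms by (simp add: sum_distrib_left GN_Suc join_halves_def mult.left_commute)
  moreover have "(\<Sum>r<2^n. join_halves n a b (2^n + r) * GN (Suc n) (2^n + r) (2*c + e))
      = G2 1 e * (\<Sum>r<2^n. b r * GN n r c)"
    using assms by (simp add: sum_distrib_left GN_Suc join_halves_def mult.left_commute)
  ultimately show ?thesis
    unfolding halves sum_lessThan_add_split by simp
qed

lemma polar_transform_less: "L > 0 \<Longrightarrow> polar_transform L n x j < L"
  by (simp add: polar_transform_def)

lemma polar_transform_join_halves_even:
  "c < 2^n \<Longrightarrow> polar_transform L (Suc n) (join_halves n a b) (2*c)
     = (polar_transform L n a c + polar_transform L n b c) mod L"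
  using sum_join_halves_GN_Suc[of c n 0 a b]
  unfolding polar_transform_def by (simp add: G2_def mod_add_eq)

lemma polar_transform_join_halves_odd:
  "c < 2^n \<Longrightarrow> polar_transform L (Suc n) (join_halves n a b) (2*c + 1) = polar_transform L n b c"
  using sum_join_halves_GN_Suc[of c n 1 a b]
  unfolding polar_transform_def by (simp add: G2_def)

subsection \<open>Pasts of the two half-length transforms\<close>

text \<open>The past at level \<open>n + 1\<close> is \<open>w\<^sub>2\<^sub>j = (a\<^sub>j + b\<^sub>j) mod L\<close>, \<open>w\<^sub>2\<^sub>j\<^sub>+\<^sub>1 = b\<^sub>j\<close>, where \<open>a\<close>, \<open>b\<close> are the
  pasts of the two half-length transforms.\<close>

definition split_past :: "nat \<Rightarrow> nat \<Rightarrow> (nat \<Rightarrow> nat) \<Rightarrow> (nat \<Rightarrow> nat) \<times> (nat \<Rightarrow> nat)" where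
  "split_past L p w =
     ((\<lambda>j\<in>{0..<p}. (w (2*j) + L - w (2*j + 1)) mod L), (\<lambda>j\<in>{0..<p}. w (2*j + 1)))"

definition merge_past :: "nat \<Rightarrow> nat \<Rightarrow> (nat \<Rightarrow> nat) \<times> (nat \<Rightarrow> nat) \<Rightarrow> nat \<Rightarrow> nat" where
  "merge_past L p v =
     (\<lambda>j\<in>{0..<2*p}. if even j then (fst v (j div 2) + snd v (j div 2)) mod L else snd v (j div 2))"

lemma split_past_fun_upd [simp]: "split_past L p (w(2*p := s)) = split_past L p w"
  by (auto simp: split_past_def fun_eq_iff)

lemma split_past_in_PiE:
  "w \<in> {0..<m} \<rightarrow>\<^sub>E {0..<L} \<Longrightarrow> 2*p \<le> m \<Longrightarrow> L > 0 \<Longrightarrow>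
     split_past L p w \<in> ({0..<p} \<rightarrow>\<^sub>E {0..<L}) \<times> ({0..<p} \<rightarrow>\<^sub>E {0..<L})"
  by (auto simp: split_past_def PiE_iff)

lemma merge_past_in_PiE:
  "v \<in> ({0..<p} \<rightarrow>\<^sub>E {0..<L}) \<times> ({0..<p} \<rightarrow>\<^sub>E {0..<L}) \<Longrightarrow> L > 0 \<Longrightarrow>
     merge_past L p v \<in> {0..<2*p} \<rightarrow>\<^sub>E {0..<L}"
  by (auto simp: merge_past_def PiE_iff less_mult_imp_div_less)

lemma split_merge_past:
  assumes "v \<in> ({0..<p} \<rightarrow>\<^sub>E {0..<L}) \<times> ({0..<p} \<rightarrow>\<^sub>E {0..<L})"
  shows "split_past L p (merge_past L p v) = v"
proof -
  have "(2 * j + 1) div 2 = j" for j :: nat by presburger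
  with assms show ?thesis
    by (cases v) (auto simp: split_past_def merge_past_def PiE_iff extensional_def fun_eq_iff)
qed

lemma merge_split_past:
  assumes "w \<in> {0..<2*p} \<rightarrow>\<^sub>E {0..<L}"
  shows "merge_past L p (split_past L p w) = w"
proof
  fix j
  show "merge_past L p (split_past L p w) j = w j"
  proof (cases "j < 2*p")
    case True
    then have "j div 2 < p" by auto
    then have "2 * (j div 2) + 1 < 2*p" by linarith
    moreover have "w i < L" if "i < 2*p" for i using assms that by auto
    ultimately show ?thesis using True
      by (cases "even j") (auto simp: merge_past_def split_past_def elim!: evenE oddE)
  qed (use assms in \<open>auto simp: merge_past_def PiE_iff extensional_def\<close>)
qed

lemma bij_betw_split_past:
  assumes "L > 0"
  shows "bij_betw (split_past L p) ({0..<2*p} \<rightarrow>\<^sub>E {0..<L})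
     (({0..<p} \<rightarrow>\<^sub>E {0..<L}) \<times> ({0..<p} \<rightarrow>\<^sub>E {0..<L}))"
proof (rule bij_betw_byWitness[where f'="merge_past L p"])
  show "split_past L p ` ({0..<2*p} \<rightarrow>\<^sub>E {0..<L}) \<subseteq> ({0..<p} \<rightarrow>\<^sub>E {0..<L}) \<times> ({0..<p} \<rightarrow>\<^sub>E {0..<L})"
    using split_past_in_PiE[OF _ order_refl assms] by blast
  show "merge_past L p ` (({0..<p} \<rightarrow>\<^sub>E {0..<L}) \<times> ({0..<p} \<rightarrow>\<^sub>E {0..<L})) \<subseteq> {0..<2*p} \<rightarrow>\<^sub>E {0..<L}"
    using merge_past_in_PiE[OF _ assms] by blast
qed (simp_all add: split_merge_past merge_split_past)

lemma bij_betw_split_past_last: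
  assumes "L > 0"
  shows "bij_betw (\<lambda>w. (split_past L p w, w (2*p))) ({0..<2*p + 1} \<rightarrow>\<^sub>E {0..<L})
     ((({0..<p} \<rightarrow>\<^sub>E {0..<L}) \<times> ({0..<p} \<rightarrow>\<^sub>E {0..<L})) \<times> {..<L})"
proof (rule bij_betw_byWitness[where f'="\<lambda>(v, s). (merge_past L p v)(2*p := s)"])
  have "(merge_past L p (split_past L p w))(2*p := w (2*p)) = w"
    if "w \<in> {0..<2*p + 1} \<rightarrow>\<^sub>E {0..<L}" for w
  proof -
    have "restrict w {0..<2*p} \<in> {0..<2*p} \<rightarrow>\<^sub>E {0..<L}" using that by auto
    moreover have "split_past L p (restrict w {0..<2*p}) = split_past L p w"
      by (auto simp: split_past_def fun_eq_iff)
    ultimately have "merge_past L p (split_past L p w) = restrict w {0..<2*p}"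
      using merge_split_past by metis
    with that show ?thesis by (auto simp: fun_eq_iff PiE_iff extensional_def)
  qed
  then show "\<forall>w\<in>{0..<2*p + 1} \<rightarrow>\<^sub>E {0..<L}.
      (case (split_past L p w, w (2*p)) of (v, s) \<Rightarrow> (merge_past L p v)(2*p := s)) = w"
    by simp
  show "\<forall>vs\<in>(({0..<p} \<rightarrow>\<^sub>E {0..<L}) \<times> ({0..<p} \<rightarrow>\<^sub>E {0..<L})) \<times> {..<L}.
      (\<lambda>w. (split_past L p w, w (2*p))) (case vs of (v, s) \<Rightarrow> (merge_past L p v)(2*p := s)) = vs"
    by (auto simp: split_merge_past)
  show "(\<lambda>w. (split_past L p w, w (2*p))) ` ({0..<2*p + 1} \<rightarrow>\<^sub>E {0..<L})
      \<subseteq> (({0..<p} \<rightarrow>\<^sub>E {0..<L}) \<times> ({0..<p} \<rightarrow>\<^sub>E {0..<L})) \<times> {..<L}"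
  proof (rule image_subsetI)
    fix w assume "w \<in> {0..<2*p + 1} \<rightarrow>\<^sub>E {0..<L}"
    then show "(split_past L p w, w (2*p)) \<in> (({0..<p} \<rightarrow>\<^sub>E {0..<L}) \<times> ({0..<p} \<rightarrow>\<^sub>E {0..<L})) \<times> {..<L}"
      using split_past_in_PiE[OF _ le_add1 assms, of w p 1] by (simp add: PiE_iff)
  qed
  show "(\<lambda>(v, s). (merge_past L p v)(2*p := s)) ` ((({0..<p} \<rightarrow>\<^sub>E {0..<L}) \<times> ({0..<p} \<rightarrow>\<^sub>E {0..<L})) \<times> {..<L})
      \<subseteq> {0..<2*p + 1} \<rightarrow>\<^sub>E {0..<L}"
    using assms merge_past_in_PiE by (fastforce simp: PiE_iff extensional_def)
qed

subsection \<open>Factorisation of the joint distribution\<close>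

definition left_query :: "nat \<Rightarrow> nat \<Rightarrow> nat \<Rightarrow> (nat \<Rightarrow> nat) \<times> (nat \<Rightarrow> 'y) \<Rightarrow> (nat \<Rightarrow> nat) \<times> (nat \<Rightarrow> 'y)" where
  "left_query L n p q = (fst (split_past L p (fst q)), lower_half n (snd q))"

definition right_query :: "nat \<Rightarrow> nat \<Rightarrow> nat \<Rightarrow> (nat \<Rightarrow> nat) \<times> (nat \<Rightarrow> 'y) \<Rightarrow> (nat \<Rightarrow> nat) \<times> (nat \<Rightarrow> 'y)" where
  "right_query L n p q = (snd (split_past L p (fst q)), upper_half n (snd q))"

lemma sum_Qset_Suc_even:
  fixes G :: "(nat \<Rightarrow> nat) \<times> (nat \<Rightarrow> 'y::finite) \<Rightarrow> (nat \<Rightarrow> nat) \<times> (nat \<Rightarrow> 'y) \<Rightarrow> 'a::comm_monoid_add"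
  assumes "L > 0"
  shows "(\<Sum>q\<in>Qset L (Suc n) (2*p). G (left_query L n p q) (right_query L n p q))
     = (\<Sum>qa\<in>Qset L n p. \<Sum>qb\<in>Qset L n p. G qa qb)"
proof -
  define V where "V = {0..<p} \<rightarrow>\<^sub>E {0..<L}"
  define Y where "Y = {0..<2^n::nat} \<rightarrow>\<^sub>E (UNIV :: 'y set)"
  have "(\<Sum>q\<in>Qset L (Suc n) (2*p). G (left_query L n p q) (right_query L n p q))
      = (\<Sum>w\<in>{0..<2*p} \<rightarrow>\<^sub>E {0..<L}. \<Sum>y1\<in>Y. \<Sum>y2\<in>Y.
           G (fst (split_past L p w), y1) (snd (split_past L p w), y2))"
    unfolding Qset_def left_query_def right_query_def Y_def sum.cartesian_product'
    by (rule sum.cong[OF refl], simp only: fst_conv snd_conv, rule sum_PiE_halves)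
  also have "\<dots> = (\<Sum>v\<in>V \<times> V. \<Sum>y1\<in>Y. \<Sum>y2\<in>Y. G (fst v, y1) (snd v, y2))"
    unfolding V_def by (rule sum.reindex_bij_betw[OF bij_betw_split_past[OF assms]])
  also have "\<dots> = (\<Sum>v1\<in>V. \<Sum>y1\<in>Y. \<Sum>v2\<in>V. \<Sum>y2\<in>Y. G (v1, y1) (v2, y2))"
    unfolding sum.cartesian_product' fst_conv snd_conv by (rule sum.cong[OF refl], rule sum.swap)
  also have "\<dots> = (\<Sum>qa\<in>Qset L n p. \<Sum>qb\<in>Qset L n p. G qa qb)"
    unfolding Qset_def V_def Y_def sum.cartesian_product' ..
  finally show ?thesis .
qed

lemma sum_Qset_Suc_odd:
  fixes G :: "(nat \<Rightarrow> nat) \<times> (nat \<Rightarrow> 'y::finite) \<Rightarrow> (nat \<Rightarrow> nat) \<times> (nat \<Rightarrow> 'y) \<Rightarrow> nat \<Rightarrow> 'a::comm_monoid_add"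
  assumes "L > 0"
  shows "(\<Sum>q\<in>Qset L (Suc n) (2*p + 1). G (left_query L n p q) (right_query L n p q) (fst q (2*p)))
     = (\<Sum>qa\<in>Qset L n p. \<Sum>qb\<in>Qset L n p. \<Sum>s<L. G qa qb s)"
proof -
  define V where "V = {0..<p} \<rightarrow>\<^sub>E {0..<L}"
  define Y where "Y = {0..<2^n::nat} \<rightarrow>\<^sub>E (UNIV :: 'y set)"
  have "(\<Sum>q\<in>Qset L (Suc n) (2*p + 1). G (left_query L n p q) (right_query L n p q) (fst q (2*p)))
      = (\<Sum>w\<in>{0..<2*p + 1} \<rightarrow>\<^sub>E {0..<L}. \<Sum>y1\<in>Y. \<Sum>y2\<in>Y.
           G (fst (split_past L p w), y1) (snd (split_past L p w), y2) (w (2*p)))"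
    unfolding Qset_def left_query_def right_query_def Y_def sum.cartesian_product'
    by (rule sum.cong[OF refl], simp only: fst_conv snd_conv, rule sum_PiE_halves)
  also have "\<dots> = (\<Sum>vs\<in>(V \<times> V) \<times> {..<L}. \<Sum>y1\<in>Y. \<Sum>y2\<in>Y. G (fst (fst vs), y1) (snd (fst vs), y2) (snd vs))"
    unfolding V_def
    by (subst sum.reindex_bij_betw[OF bij_betw_split_past_last[OF assms], symmetric]) simp
  also have "\<dots> = (\<Sum>v1\<in>V. \<Sum>v2\<in>V. \<Sum>y1\<in>Y. \<Sum>y2\<in>Y. \<Sum>s<L. G (v1, y1) (v2, y2) s)"
    unfolding sum.cartesian_product' fst_conv snd_conv
    by (intro sum.cong[OF refl]) (rule sum_swap3)
  also have "\<dots> = (\<Sum>v1\<in>V. \<Sum>y1\<in>Y. \<Sum>v2\<in>V. \<Sum>y2\<in>Y. \<Sum>s<L. G (v1, y1) (v2, y2) s)"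
    by (rule sum.cong[OF refl], rule sum.swap)
  also have "\<dots> = (\<Sum>qa\<in>Qset L n p. \<Sum>qb\<in>Qset L n p. \<Sum>s<L. G qa qb s)"
    unfolding Qset_def V_def Y_def sum.cartesian_product' ..
  finally show ?thesis .
qed

lemma all_less_double_iff: "(\<forall>j<2*p. Q j) \<longleftrightarrow> (\<forall>j<p. Q (2*j) \<and> Q (2*j + 1))" for p :: nat
proof
  assume pairs: "\<forall>j<p. Q (2*j) \<and> Q (2*j + 1)"
  show "\<forall>j<2*p. Q j"
  proof (intro allI impI)
    fix j assume "j < 2*p"
    then have "j div 2 < p" by auto
    moreover have "j = 2 * (j div 2) \<or> j = 2 * (j div 2) + 1" by presburger
    ultimately show "Q j" using pairs by metis
  qed
qed auto

lemma polar_past_join_halves_iff: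
  assumes "L > 0" "p \<le> 2^n" "\<And>j. j < 2*p \<Longrightarrow> w j < L"
  shows "(\<forall>j<2*p. polar_transform L (Suc n) (join_halves n a b) j = w j) \<longleftrightarrow>
    (\<forall>j<p. polar_transform L n a j = fst (split_past L p w) j
         \<and> polar_transform L n b j = snd (split_past L p w) j)"
  unfolding all_less_double_iff
proof (intro all_cong1 imp_cong refl)
  fix j assume "j < p"
  then have "j < 2^n" "w (2*j) < L" "w (2*j + 1) < L" using assms by simp_all
  then show "(polar_transform L (Suc n) (join_halves n a b) (2*j) = w (2*j)
      \<and> polar_transform L (Suc n) (join_halves n a b) (2*j + 1) = w (2*j + 1))
    \<longleftrightarrow> (polar_transform L n a j = fst (split_past L p w) j
      \<and> polar_transform L n b j = snd (split_past L p w) j)"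
    unfolding polar_transform_join_halves_even[OF \<open>j < 2^n\<close>]
      polar_transform_join_halves_odd[OF \<open>j < 2^n\<close>]
    using \<open>j < p\<close> polar_transform_less[OF assms(1)]
      add_mod_eq_iff_eq_sub_mod[of "polar_transform L n b j" L "polar_transform L n a j" "w (2*j)"]
    by (auto simp: split_past_def add.commute)
qed

lemma joint_UQ_Suc:
  "joint_UQ L P (Suc n) m c (w, y) =
     (\<Sum>a\<in>{0..<2^n} \<rightarrow>\<^sub>E {0..<L}. \<Sum>b\<in>{0..<2^n} \<rightarrow>\<^sub>E {0..<L}.
        if (\<forall>j<m. polar_transform L (Suc n) (join_halves n a b) j = w j)
           \<and> polar_transform L (Suc n) (join_halves n a b) m = c
        then (\<Prod>j<2^n. P (a j) (lower_half n y j)) * (\<Prod>j<2^n. P (b j) (upper_half n y j))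
        else 0)"
proof -
  have split_prod: "(\<Prod>j<2^Suc n. P (join_halves n a b j) (y j))
      = (\<Prod>j<2^n. P (a j) (lower_half n y j)) * (\<Prod>j<2^n. P (b j) (upper_half n y j))" for a b
    unfolding prod_join_halves[where F="\<lambda>x j. P x (y j)"] by (simp add: lower_half_def upper_half_def)
  show ?thesis
    unfolding joint_UQ_def sum_PiE_join_halves snd_conv fst_conv split_prod ..
qed

lemma joint_UQ_Suc_odd:
  assumes L: "L > 0" and "p < 2^n" and q: "q \<in> Qset L (Suc n) (2*p + 1)" and "c < L"
  shows "joint_UQ L P (Suc n) (2*p + 1) c q =
     joint_UQ L P n p ((fst q (2*p) + L - c) mod L) (left_query L n p q)
     * joint_UQ L P n p c (right_query L n p q)"
proof -
  obtain w y where qwy: "q = (w, y)" by (cases q)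
  have w: "w j < L" if "j < 2*p + 1" for j using q that by (auto simp: qwy Qset_def)
  define U where "U = polar_transform L n"
  define A where "A a \<longleftrightarrow> (\<forall>j<p. U a j = fst (split_past L p w) j) \<and> U a p = (w (2*p) + L - c) mod L" for a
  define B where "B b \<longleftrightarrow> (\<forall>j<p. U b j = snd (split_past L p w) j) \<and> U b p = c" for b
  define PA where "PA a = (\<Prod>j<2^n. P (a j) (lower_half n y j))" for a
  define PB where "PB b = (\<Prod>j<2^n. P (b j) (upper_half n y j))" for b
  have event: "((\<forall>j<2*p + 1. polar_transform L (Suc n) (join_halves n a b) j = w j)
      \<and> polar_transform L (Suc n) (join_halves n a b) (2*p + 1) = c) \<longleftrightarrow> A a \<and> B b" for a b
  proof -
    have "(\<forall>j<2*p + 1. polar_transform L (Suc n) (join_halves n a b) j = w j) \<longleftrightarrow>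
        (\<forall>j<2*p. polar_transform L (Suc n) (join_halves n a b) j = w j)
        \<and> (U a p + U b p) mod L = w (2*p)"
      using polar_transform_join_halves_even[OF \<open>p < 2^n\<close>] by (auto simp: U_def less_Suc_eq)
    moreover have "(U a p + U b p) mod L = w (2*p) \<and> U b p = c \<longleftrightarrow> U a p = (w (2*p) + L - c) mod L \<and> U b p = c"
      using add_mod_eq_iff_eq_sub_mod[of "U b p" L "U a p" "w (2*p)"] w[of "2*p"] polar_transform_less[OF L]
      by (auto simp: U_def add.commute)
    ultimately show ?thesis
      using polar_past_join_halves_iff[OF L less_imp_le[OF \<open>p < 2^n\<close>], of w a b] w
        polar_transform_join_halves_odd[OF \<open>p < 2^n\<close>]
      unfolding A_def B_def U_def by auto
  qed
  have "joint_UQ L P (Suc n) (2*p + 1) c q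
      = (\<Sum>a\<in>{0..<2^n} \<rightarrow>\<^sub>E {0..<L}. \<Sum>b\<in>{0..<2^n} \<rightarrow>\<^sub>E {0..<L}. if A a \<and> B b then PA a * PB b else 0)"
    unfolding qwy joint_UQ_Suc event PA_def PB_def ..
  also have "\<dots> = (\<Sum>a\<in>{0..<2^n} \<rightarrow>\<^sub>E {0..<L}. if A a then PA a else 0)
      * (\<Sum>b\<in>{0..<2^n} \<rightarrow>\<^sub>E {0..<L}. if B b then PB b else 0)"
    unfolding sum_product by (intro sum.cong refl) simp
  also have "\<dots> = joint_UQ L P n p ((fst q (2*p) + L - c) mod L) (left_query L n p q)
      * joint_UQ L P n p c (right_query L n p q)"
    unfolding joint_UQ_def left_query_def right_query_def qwy A_def B_def U_def PA_def PB_def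
    by (simp only: fst_conv snd_conv)
  finally show ?thesis .
qed

lemma joint_UQ_Suc_even:
  assumes L: "L > 0" and "p < 2^n" and q: "q \<in> Qset L (Suc n) (2*p)" and "c < L"
  shows "joint_UQ L P (Suc n) (2*p) c q =
     cconv L (\<lambda>c. joint_UQ L P n p c (left_query L n p q)) (\<lambda>c. joint_UQ L P n p c (right_query L n p q)) c"
proof -
  obtain w y where qwy: "q = (w, y)" by (cases q)
  have w: "w j < L" if "j < 2*p" for j using q that by (auto simp: qwy Qset_def)
  define XS where "XS = {0..<2^n::nat} \<rightarrow>\<^sub>E {0..<L}"
  define U where "U = polar_transform L n"
  define A where "A a \<longleftrightarrow> (\<forall>j<p. U a j = fst (split_past L p w) j)" for a
  define B where "B b \<longleftrightarrow> (\<forall>j<p. U b j = snd (split_past L p w) j)" for b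
  define PA where "PA a = (\<Prod>j<2^n. P (a j) (lower_half n y j))" for a
  define PB where "PB b = (\<Prod>j<2^n. P (b j) (upper_half n y j))" for b
  have event: "((\<forall>j<2*p. polar_transform L (Suc n) (join_halves n a b) j = w j)
      \<and> polar_transform L (Suc n) (join_halves n a b) (2*p) = c)
      \<longleftrightarrow> A a \<and> B b \<and> U b p = (c + L - U a p) mod L" for a b
    using polar_past_join_halves_iff[OF L less_imp_le[OF \<open>p < 2^n\<close>], of w a b] w
      polar_transform_join_halves_even[OF \<open>p < 2^n\<close>]
      add_mod_eq_iff_eq_sub_mod[OF polar_transform_less[OF L] polar_transform_less[OF L] \<open>c < L\<close>]
    unfolding A_def B_def U_def by auto
  have "joint_UQ L P (Suc n) (2*p) c q
      = (\<Sum>a\<in>XS. \<Sum>b\<in>XS. if A a \<and> B b \<and> U b p = (c + L - U a p) mod L then PA a * PB b else 0)"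
    unfolding qwy joint_UQ_Suc event PA_def PB_def XS_def ..
  also have "\<dots> = (\<Sum>a\<in>XS. \<Sum>b\<in>XS. \<Sum>c'<L.
      (if A a \<and> U a p = c' then PA a else 0) * (if B b \<and> U b p = (c + L - c') mod L then PB b else 0))"
  proof (intro sum.cong refl)
    fix a b
    have "(\<Sum>c'<L. (if A a \<and> U a p = c' then PA a else 0) * (if B b \<and> U b p = (c + L - c') mod L then PB b else 0))
        = (\<Sum>c'<L. if c' = U a p then (if A a \<and> B b \<and> U b p = (c + L - U a p) mod L then PA a * PB b else 0) else 0)"
      by (intro sum.cong refl) auto
    then show "(if A a \<and> B b \<and> U b p = (c + L - U a p) mod L then PA a * PB b else 0)
        = (\<Sum>c'<L. (if A a \<and> U a p = c' then PA a else 0) * (if B b \<and> U b p = (c + L - c') mod L then PB b else 0))"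
      using polar_transform_less[OF L] by (simp add: U_def)
  qed
  also have "\<dots> = (\<Sum>c'<L. (\<Sum>a\<in>XS. if A a \<and> U a p = c' then PA a else 0)
      * (\<Sum>b\<in>XS. if B b \<and> U b p = (c + L - c') mod L then PB b else 0))"
    unfolding sum_product by (rule sum_swap3[symmetric])
  also have "\<dots> = cconv L (\<lambda>c. joint_UQ L P n p c (left_query L n p q))
      (\<lambda>c. joint_UQ L P n p c (right_query L n p q)) c"
    unfolding cconv_def joint_UQ_def left_query_def right_query_def qwy A_def B_def U_def PA_def PB_def XS_def
    by (simp only: fst_conv snd_conv)
  finally show ?thesis .
qed

lemma sum_past_indicator:
  assumes "L > 0"
  shows "(\<Sum>v\<in>{0..<p} \<rightarrow>\<^sub>E {0..<L}. \<Sum>c<L.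
      if (\<forall>j<p. polar_transform L n x j = v j) \<and> polar_transform L n x p = c then X else 0) = (X :: real)"
proof -
  define r where "r = restrict (polar_transform L n x) {0..<p}"
  have past_iff: "(\<forall>j<p. polar_transform L n x j = v j) \<longleftrightarrow> v = r" if "v \<in> {0..<p} \<rightarrow>\<^sub>E {0..<L}" for v
    using that by (auto simp: r_def PiE_iff extensional_def fun_eq_iff)
  have "(\<Sum>c<L. if (\<forall>j<p. polar_transform L n x j = v j) \<and> polar_transform L n x p = c then X else 0)
      = (if v = r then X else 0)" if "v \<in> {0..<p} \<rightarrow>\<^sub>E {0..<L}" for v
    using past_iff[OF that] polar_transform_less[OF assms] by (simp add: if_distrib[symmetric] conj_commute)
  moreover have "r \<in> {0..<p} \<rightarrow>\<^sub>E {0..<L}"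
    using polar_transform_less[OF assms] by (auto simp: r_def)
  ultimately show ?thesis
    by (simp add: sum.delta finite_PiE cong: sum.cong)
qed

lemma joint_UQ_total:
  fixes P :: "nat \<Rightarrow> 'y::finite \<Rightarrow> real"
  assumes "L > 0"
  shows "(\<Sum>q\<in>Qset L n p. \<Sum>c<L. joint_UQ L P n p c q) = (\<Sum>u<L. \<Sum>y\<in>UNIV. P u y) ^ 2^n"
proof -
  define XS where "XS = {0..<2^n::nat} \<rightarrow>\<^sub>E {0..<L}"
  define V where "V = {0..<p} \<rightarrow>\<^sub>E {0..<L}"
  define Y where "Y = {0..<2^n::nat} \<rightarrow>\<^sub>E (UNIV :: 'y set)"
  define E where "E x v c \<longleftrightarrow> (\<forall>j<p. polar_transform L n x j = v j) \<and> polar_transform L n x p = c" for x v c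
  define PP where "PP x y = (\<Prod>j<2^n. P (x j) (y j))" for x :: "nat \<Rightarrow> nat" and y
  have "(\<Sum>q\<in>Qset L n p. \<Sum>c<L. joint_UQ L P n p c q)
      = (\<Sum>v\<in>V. \<Sum>y\<in>Y. \<Sum>c<L. \<Sum>x\<in>XS. if E x v c then PP x y else 0)"
    unfolding Qset_def joint_UQ_def sum.cartesian_product' V_def Y_def XS_def E_def PP_def
    by (simp only: fst_conv snd_conv)
  also have "\<dots> = (\<Sum>y\<in>Y. \<Sum>x\<in>XS. \<Sum>v\<in>V. \<Sum>c<L. if E x v c then PP x y else 0)"
    by (subst sum.swap) (rule sum.cong[OF refl], rule sum_swap3[symmetric])
  also have "\<dots> = (\<Sum>y\<in>Y. \<Sum>x\<in>XS. PP x y)"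
    unfolding V_def E_def using sum_past_indicator[OF assms] by simp
  also have "\<dots> = (\<Sum>y\<in>Y. \<Prod>j\<in>{0..<2^n}. \<Sum>u\<in>{0..<L}. P u (y j))"
    unfolding XS_def PP_def
    by (subst prod_sum_PiE[where f="\<lambda>j u. P u (_ j)"]) (simp_all add: atLeast0LessThan)
  also have "\<dots> = (\<Prod>j\<in>{0..<2^n::nat}. \<Sum>y\<in>UNIV. \<Sum>u\<in>{0..<L}. P u y)"
    unfolding Y_def by (subst prod_sum_PiE) simp_all
  also have "\<dots> = (\<Sum>u<L. \<Sum>y\<in>UNIV. P u y) ^ 2^n"
    by (simp add: sum.swap[of _ UNIV] atLeast0LessThan)
  finally show ?thesis .
qed

lemma joint_UQ_nonneg: "(\<And>u y. P u y \<ge> 0) \<Longrightarrow> joint_UQ L P n p c q \<ge> 0"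
  unfolding joint_UQ_def by (intro sum_nonneg) (auto intro: prod_nonneg)

lemma Kproc_eq:
  assumes "\<And>u y. P u y \<ge> 0"
  shows "Kproc L P n p = (\<Sum>q\<in>Qset L n p. abs_diff_sum L (\<lambda>c. joint_UQ L P n p c q)) / (2 * (real L - 1))"
  unfolding Kproc_def by (rule tvK_eq_abs_diff_sum) (rule joint_UQ_nonneg[OF assms])

lemma Kproc_Suc_even_le:
  assumes L: "L > 0" and nonneg: "\<And>u y. P u y \<ge> 0" and "p < 2^n"
  shows "Kproc L P (Suc n) (2*p) \<le> 2 * (real L - 1) / real L * (Kproc L P n p)^2"
proof -
  define D where "D q = abs_diff_sum L (\<lambda>c. joint_UQ L P n p c q)" for q
  define S where "S = (\<Sum>q\<in>Qset L n p. D q)"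
  have "(\<Sum>q\<in>Qset L (Suc n) (2*p). abs_diff_sum L (\<lambda>c. joint_UQ L P (Suc n) (2*p) c q))
      = (\<Sum>q\<in>Qset L (Suc n) (2*p). abs_diff_sum L (cconv L (\<lambda>c. joint_UQ L P n p c (left_query L n p q))
           (\<lambda>c. joint_UQ L P n p c (right_query L n p q))))"
    by (auto intro!: sum.cong abs_diff_sum_cong joint_UQ_Suc_even[OF L \<open>p < 2^n\<close>])
  also have "\<dots> \<le> (\<Sum>q\<in>Qset L (Suc n) (2*p). D (left_query L n p q) * D (right_query L n p q) / real L)"
    unfolding D_def by (intro sum_mono abs_diff_sum_cconv_le L)
  also have "\<dots> = (\<Sum>q\<in>Qset L (Suc n) (2*p). D (left_query L n p q) * D (right_query L n p q)) / real L"
    by (simp add: sum_divide_distrib)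
  also have "\<dots> = S * S / real L"
    unfolding sum_Qset_Suc_even[OF L, where G="\<lambda>qa qb. D qa * D qb"] S_def sum_product ..
  finally have numerator_le:
    "(\<Sum>q\<in>Qset L (Suc n) (2*p). abs_diff_sum L (\<lambda>c. joint_UQ L P (Suc n) (2*p) c q)) \<le> S * S / real L" .
  have "Kproc L P (Suc n) (2*p)
      = (\<Sum>q\<in>Qset L (Suc n) (2*p). abs_diff_sum L (\<lambda>c. joint_UQ L P (Suc n) (2*p) c q)) / (2 * (real L - 1))"
    by (rule Kproc_eq[OF nonneg])
  also have "\<dots> \<le> S * S / real L / (2 * (real L - 1))"
    using numerator_le L by (intro divide_right_mono) auto
  also have "\<dots> = 2 * (real L - 1) / real L * (S / (2 * (real L - 1)))^2"
  proof -
    have "x * x / l / (2 * c) = 2 * c / l * (x / (2 * c))^2" if "c \<noteq> 0" for x l c :: real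
      using that by (simp add: power2_eq_square field_simps)
    from this[of "real L - 1" S "real L"] show ?thesis by (cases "real L - 1 = 0") simp_all
  qed
  also have "\<dots> = 2 * (real L - 1) / real L * (Kproc L P n p)^2"
    by (simp add: Kproc_eq[OF nonneg] S_def D_def)
  finally show ?thesis .
qed

lemma Kproc_Suc_odd_le:
  fixes P :: "nat \<Rightarrow> 'y::finite \<Rightarrow> real"
  assumes L: "L > 0" and nonneg: "\<And>u y. P u y \<ge> 0" and total: "(\<Sum>u<L. \<Sum>y\<in>UNIV. P u y) = 1"
    and "p < 2^n"
  shows "Kproc L P (Suc n) (2*p + 1) \<le> 2 * Kproc L P n p"
proof -
  define f where "f q c = joint_UQ L P n p c q" for q c
  define D where "D q = abs_diff_sum L (f q)" for q
  define F where "F q = (\<Sum>c<L. f q c)" for q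
  have F_total: "(\<Sum>q\<in>Qset L n p. F q) = 1"
    unfolding F_def f_def joint_UQ_total[OF L] total by simp
  have "(\<Sum>q\<in>Qset L (Suc n) (2*p + 1). abs_diff_sum L (\<lambda>c. joint_UQ L P (Suc n) (2*p + 1) c q))
      = (\<Sum>q\<in>Qset L (Suc n) (2*p + 1). (\<lambda>qa qb s. abs_diff_sum L (\<lambda>c. f qa ((s + L - c) mod L) * f qb c))
           (left_query L n p q) (right_query L n p q) (fst q (2*p)))"
    unfolding f_def
    by (intro sum.cong[OF refl] abs_diff_sum_cong joint_UQ_Suc_odd[OF L \<open>p < 2^n\<close>]) assumption+
  also have "\<dots> = (\<Sum>qa\<in>Qset L n p. \<Sum>qb\<in>Qset L n p. \<Sum>s<L.
      abs_diff_sum L (\<lambda>c. f qa ((s + L - c) mod L) * f qb c))"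
    by (rule sum_Qset_Suc_odd[OF L])
  also have "\<dots> \<le> (\<Sum>qa\<in>Qset L n p. \<Sum>qb\<in>Qset L n p. F qa * D qb + F qb * D qa)"
    unfolding F_def D_def
    by (intro sum_mono sum_abs_diff_sum_reflect_mult_le) (simp_all add: f_def joint_UQ_nonneg nonneg)
  also have "\<dots> = 2 * (\<Sum>q\<in>Qset L n p. D q)"
    by (simp add: sum.distrib sum_product[symmetric] F_total sum.swap[of _ "Qset L n p" "Qset L n p"]
        mult.commute)
  finally have numerator_le: "(\<Sum>q\<in>Qset L (Suc n) (2*p + 1). abs_diff_sum L (\<lambda>c. joint_UQ L P (Suc n) (2*p + 1) c q))
      \<le> 2 * (\<Sum>q\<in>Qset L n p. D q)" .
  have "Kproc L P (Suc n) (2*p + 1)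
      = (\<Sum>q\<in>Qset L (Suc n) (2*p + 1). abs_diff_sum L (\<lambda>c. joint_UQ L P (Suc n) (2*p + 1) c q))
        / (2 * (real L - 1))"
    by (rule Kproc_eq[OF nonneg])
  also have "\<dots> \<le> 2 * (\<Sum>q\<in>Qset L n p. D q) / (2 * (real L - 1))"
    using numerator_le L by (intro divide_right_mono) auto
  also have "\<dots> = 2 * Kproc L P n p"
    by (simp add: Kproc_eq[OF nonneg] D_def f_def[abs_def])
  finally show ?thesis .
qed

theorem proposition3:
  fixes L :: nat and P :: "nat \<Rightarrow> 'y::finite \<Rightarrow> real" and n p b :: nat
  assumes "L \<ge> 2"
    and "\<And>u y. P u y \<ge> 0"
    and "(\<Sum>u<L. \<Sum>y\<in>UNIV. P u y) = 1"
    and "n \<ge> 1" and "p < 2^n" and "b \<in> {0, 1}"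
  shows "(b = 0 \<longrightarrow> Kproc L P (n+1) (2*p + b) \<le> 2 * (real L - 1) / real L * (Kproc L P n p)^2)
       \<and> (b = 1 \<longrightarrow> Kproc L P (n+1) (2*p + b) \<le> (1 + real L / 2) * Kproc L P n p)"
proof -
  have L: "L > 0" using assms(1) by simp
  have "Kproc L P n p \<ge> 0"
    using L by (simp add: Kproc_eq[OF assms(2)] abs_diff_sum_nonneg sum_nonneg)
  then have "2 * Kproc L P n p \<le> (1 + real L / 2) * Kproc L P n p"
    using assms(1) by (intro mult_right_mono) auto
  then show ?thesis
    using Kproc_Suc_even_le[OF L assms(2,5)] Kproc_Suc_odd_le[OF L assms(2,3,5)] by auto
qed

end
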